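(* Let $(X,d)$ be a metric space, $Y$ a complete subspace of $X$, and $T,g:X\to X$. Assume: (a) $T(X)\subseteq Y\cap g(X)$; (b) there exists $G\in\mathcal{G}$ such that for all $x,y\in X$, $$G\big(d(Tx,Ty),\,d(gx,gy),\,d(gx,Tx),\,d(gy,Ty),\,d(gx,Ty),\,d(gy,Tx)\big)\le0;$$ and either (e) $Y\subseteq g(X)$, or alternatively (e$'$) $T$ and $g$ are compatible and $T$ and $g$ are continuous. Then $T$ and $g$ have a coincidence point.
   Context: $\mathbb{R}_+=[0,\infty)$. $\Phi$: functions $\phi:\mathbb{R}_+\to\mathbb{R}_+$, increasing, $\phi(0)=0$, $\sum_{n\ge1}\phi^n(t)<\infty$ for every $t>0$. $\mathcal{G}$: lower semi-continuous $G:\mathbb{R}_+^6\to\mathbb{R}$ such that (G1) $G$ is decreasing in its fifth and sixth variables, and there is $\phi\in\Phi$ such that for all $r,s\ge0$, $G(r,s,s,r,r+s,0)\le0$ implies $r\le\phi(s)$; (G2) $G(r,0,r,0,0,r)>0$ for all $r>0$. $T$ and $g$ are compatible if $\lim_n d(T(gx_n),g(Tx_n))=0$ whenever $\{x_n\}\subset X$ satisfies $\lim_n gx_n=\lim_n Tx_n$. A coincidence point is $x$ with $Tx=gx$. *)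

theory Defs
  imports "HOL-Analysis.Analysis"
begin

type_synonym real6 = "real \<times> real \<times> real \<times> real \<times> real \<times> real"

definition nonneg6 :: "real6 set" where
  "nonneg6 = {(a,b,c,d,e,f). 0 \<le> a \<and> 0 \<le> b \<and> 0 \<le> c \<and> 0 \<le> d \<and> 0 \<le> e \<and> 0 \<le> f}"

definition lsc_on :: "'a::topological_space set \<Rightarrow> ('a \<Rightarrow> real) \<Rightarrow> bool" where
  "lsc_on S f \<longleftrightarrow> (\<forall>x\<in>S. \<forall>e>0. \<forall>\<^sub>F y in at x within S. f x - e < f y)"

definition PhiClass :: "(real \<Rightarrow> real) set" where
  "PhiClass = {\<phi>. (\<forall>t\<ge>0. 0 \<le> \<phi> t) \<and> mono_on {0..} \<phi> \<and> \<phi> 0 = 0 \<and>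
      (\<forall>t>0. summable (\<lambda>n. (\<phi> ^^ Suc n) t))}"

definition GClass :: "(real6 \<Rightarrow> real) set" where
  "GClass = {G. lsc_on nonneg6 G \<and>
     (\<forall>a b c d e e' f. 0 \<le> a \<longrightarrow> 0 \<le> b \<longrightarrow> 0 \<le> c \<longrightarrow> 0 \<le> d \<longrightarrow> 0 \<le> e \<longrightarrow> e \<le> e' \<longrightarrow> 0 \<le> f \<longrightarrow>
         G (a,b,c,d,e',f) \<le> G (a,b,c,d,e,f)) \<and>
     (\<forall>a b c d e f f'. 0 \<le> a \<longrightarrow> 0 \<le> b \<longrightarrow> 0 \<le> c \<longrightarrow> 0 \<le> d \<longrightarrow> 0 \<le> e \<longrightarrow> 0 \<le> f \<longrightarrow> f \<le> f' \<longrightarrow>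
         G (a,b,c,d,e,f') \<le> G (a,b,c,d,e,f)) \<and>
     (\<exists>\<phi>\<in>PhiClass. \<forall>r s. 0 \<le> r \<longrightarrow> 0 \<le> s \<longrightarrow> G (r,s,s,r,r+s,0) \<le> 0 \<longrightarrow> r \<le> \<phi> s) \<and>
     (\<forall>r>0. G (r,0,r,0,0,r) > 0)}"

definition compatible :: "('a::metric_space \<Rightarrow> 'a) \<Rightarrow> ('a \<Rightarrow> 'a) \<Rightarrow> bool" where
  "compatible T g \<longleftrightarrow> (\<forall>x :: nat \<Rightarrow> 'a. (\<exists>t. (\<lambda>n. g (x n)) \<longlonglongrightarrow> t \<and> (\<lambda>n. T (x n)) \<longlonglongrightarrow> t) \<longrightarrow>
      (\<lambda>n. dist (T (g (x n))) (g (T (x n)))) \<longlonglongrightarrow> 0)"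

end

theory Submission
  imports Defs
begin

text \<open>Since every value of T is a value of g, one can choose a Jungck sequence with
  g x(n+1) = T x(n). Condition (G1), applied to the pair x(n+1), x(n+2) together with the
  triangle inequality in the fifth argument, gives d(y(n+1), y(n+2)) \<le> \<phi>(d(y(n), y(n+1))) for
  y(n) = T x(n), so the steps are dominated by the summable sequence \<phi>^n(d(y(0), y(1))) and y is
  Cauchy in Y. If its limit is g u, lower semicontinuity turns the inequality for the pair
  u, x(n+1) into G(d(Tu, gu), 0, d(gu, Tu), 0, 0, d(gu, Tu)) \<le> 0, which (G2) allows only when
  Tu = gu. In the compatible case, continuity makes T(g x(n)) and g(T x(n)) converge to Tz and
  gz, and compatibility makes their distance tend to 0.\<close>

definition G_contraction :: "(real6 \<Rightarrow> real) \<Rightarrow> ('a::metric_space \<Rightarrow> 'a) \<Rightarrow> ('a \<Rightarrow> 'a) \<Rightarrow> bool" where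
  "G_contraction G T g \<longleftrightarrow> (\<forall>x y. G (dist (T x) (T y), dist (g x) (g y), dist (g x) (T x),
      dist (g y) (T y), dist (g x) (T y), dist (g y) (T x)) \<le> 0)"

lemma GClassD:
  assumes "G \<in> GClass"
  shows "lsc_on nonneg6 G"
    and "\<And>a b c d e e' f. 0 \<le> a \<Longrightarrow> 0 \<le> b \<Longrightarrow> 0 \<le> c \<Longrightarrow> 0 \<le> d \<Longrightarrow> 0 \<le> e \<Longrightarrow> e \<le> e' \<Longrightarrow> 0 \<le> f \<Longrightarrow>
      G (a, b, c, d, e', f) \<le> G (a, b, c, d, e, f)"
    and "\<exists>\<phi>\<in>PhiClass. \<forall>r s. 0 \<le> r \<longrightarrow> 0 \<le> s \<longrightarrow> G (r, s, s, r, r + s, 0) \<le> 0 \<longrightarrow> r \<le> \<phi> s"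
    and "\<And>r. r > 0 \<Longrightarrow> G (r, 0, r, 0, 0, r) > 0"
  using assms unfolding GClass_def mem_Collect_eq by simp_all

lemma PhiClassD:
  assumes "\<phi> \<in> PhiClass"
  shows "mono_on {0..} \<phi>" "\<phi> 0 = 0" "\<And>t. t > 0 \<Longrightarrow> summable (\<lambda>n. (\<phi> ^^ Suc n) t)"
  using assms unfolding PhiClass_def mem_Collect_eq by simp_all

lemma Cauchy_if_dist_Suc_le_summable:
  fixes y :: "nat \<Rightarrow> 'a::metric_space"
  assumes "summable d" and dist_le: "\<And>n. dist (y n) (y (Suc n)) \<le> d n"
  shows "Cauchy y"
proof (rule metric_CauchyI)
  define s where "s n = (\<Sum>i<n. d i)" for n
  have "Cauchy s"
    using \<open>summable d\<close> unfolding s_def summable_iff_convergent by (rule convergent_Cauchy)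
  have dist_le_diff: "dist (y m) (y n) \<le> s n - s m" if "m \<le> n" for m n
    using that
  proof (induction n rule: dec_induct)
    case (step n)
    have "dist (y m) (y (Suc n)) \<le> dist (y m) (y n) + dist (y n) (y (Suc n))"
      by (rule dist_triangle)
    also have "\<dots> \<le> s (Suc n) - s m"
      using step dist_le[of n] by (simp add: s_def)
    finally show ?case .
  qed simp
  have dist_le_abs: "dist (y m) (y n) \<le> \<bar>s m - s n\<bar>" for m n
    using dist_le_diff[of m n] dist_le_diff[of n m] by (cases "m \<le> n") (simp_all add: dist_commute)
  fix e :: real
  assume "0 < e"
  then obtain M where "\<forall>m\<ge>M. \<forall>n\<ge>M. dist (s m) (s n) < e"
    using \<open>Cauchy s\<close> unfolding Cauchy_def by blast
  then have "\<forall>m\<ge>M. \<forall>n\<ge>M. dist (y m) (y n) < e"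
    using dist_le_abs unfolding dist_real_def by (meson order_le_less_trans)
  then show "\<exists>M. \<forall>m\<ge>M. \<forall>n\<ge>M. dist (y m) (y n) < e" ..
qed

lemma lsc_on_sequentially_le:
  fixes f :: "'a::metric_space \<Rightarrow> real"
  assumes "lsc_on S f" "p \<in> S" "\<And>n. q n \<in> S" "q \<longlonglongrightarrow> p" "\<And>n. f (q n) \<le> c"
  shows "f p \<le> c"
proof (rule ccontr)
  assume "\<not> f p \<le> c"
  then have "\<forall>\<^sub>F y in at p within S. f p - (f p - c) < f y"
    using assms(1)[unfolded lsc_on_def, rule_format, OF assms(2), of "f p - c"] by simp
  then obtain d where "d > 0" and d: "\<And>x. x \<in> S \<Longrightarrow> x \<noteq> p \<Longrightarrow> dist x p < d \<Longrightarrow> c < f x"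
    unfolding eventually_at by auto
  obtain N where "dist (q N) p < d"
    using assms(4) \<open>d > 0\<close> unfolding lim_sequentially by blast
  then have "c < f (q N)"
    using d[OF assms(3)] \<open>\<not> f p \<le> c\<close> by (cases "q N = p") auto
  then show False
    using assms(5) not_le by blast
qed

lemma PhiClass_funpow_summable:
  assumes "\<phi> \<in> PhiClass" "t \<ge> 0"
  shows "summable (\<lambda>n. (\<phi> ^^ n) t)"
proof (cases "t = 0")
  case True
  have "(\<phi> ^^ n) 0 = 0" for n
    by (induction n) (simp_all add: PhiClassD(2)[OF assms(1)])
  then show ?thesis using True by simp
next
  case False
  then have "summable (\<lambda>n. (\<phi> ^^ Suc n) t)"
    using assms by (intro PhiClassD(3)) auto
  then show ?thesis
    by (rule summable_Suc_iff[THEN iffD1])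
qed

lemma Cauchy_if_dist_Suc_le_PhiClass:
  fixes y :: "nat \<Rightarrow> 'a::metric_space"
  assumes "\<phi> \<in> PhiClass"
    and step: "\<And>n. dist (y (Suc n)) (y (Suc (Suc n))) \<le> \<phi> (dist (y n) (y (Suc n)))"
  shows "Cauchy y"
proof (rule Cauchy_if_dist_Suc_le_summable)
  let ?t = "dist (y 0) (y 1)"
  show "summable (\<lambda>n. (\<phi> ^^ n) ?t)"
    using assms(1) by (simp add: PhiClass_funpow_summable)
  show "dist (y n) (y (Suc n)) \<le> (\<phi> ^^ n) ?t" for n
  proof (induction n)
    case (Suc n)
    have "dist (y (Suc n)) (y (Suc (Suc n))) \<le> \<phi> (dist (y n) (y (Suc n)))"
      by (rule step)
    also have "\<dots> \<le> \<phi> ((\<phi> ^^ n) ?t)"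
    proof (rule mono_onD[OF PhiClassD(1)[OF assms(1)]])
      show "(\<phi> ^^ n) ?t \<in> {0..}"
        using order_trans[OF zero_le_dist Suc] by simp
    qed (use Suc in simp_all)
    finally show ?case by simp
  qed simp
qed

lemma Jungck_sequence_exists:
  assumes "range T \<subseteq> range g"
  obtains x where "\<And>n. g (x (Suc n)) = T (x n)"
proof -
  have "\<exists>u. g u = T v" for v
  proof -
    have "T v \<in> range g"
      using assms by blast
    then show ?thesis
      by (metis rangeE)
  qed
  then obtain h where "\<And>v. g (h v) = T v"
    by metis
  then have "g ((h ^^ Suc n) x0) = T ((h ^^ n) x0)" for n x0
    by simp
  then show ?thesis by (rule that)
qed

lemma G_contraction_Jungck_step:
  assumes "G \<in> GClass" "G_contraction G T g"
    and phi: "\<And>r s. 0 \<le> r \<Longrightarrow> 0 \<le> s \<Longrightarrow> G (r, s, s, r, r + s, 0) \<le> 0 \<Longrightarrow> r \<le> \<phi> s"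
    and Jungck: "\<And>n. g (x (Suc n)) = T (x n)"
  shows "dist (T (x (Suc n))) (T (x (Suc (Suc n)))) \<le> \<phi> (dist (T (x n)) (T (x (Suc n))))"
proof (rule phi)
  let ?r = "dist (T (x (Suc n))) (T (x (Suc (Suc n))))"
  let ?s = "dist (T (x n)) (T (x (Suc n)))"
  let ?e = "dist (T (x n)) (T (x (Suc (Suc n))))"
  have "?e \<le> ?r + ?s"
    by (metis add.commute dist_triangle)
  then have "G (?r, ?s, ?s, ?r, ?r + ?s, 0) \<le> G (?r, ?s, ?s, ?r, ?e, 0)"
    using GClassD(2)[OF assms(1)] by simp
  also have "G (?r, ?s, ?s, ?r, ?e, 0) \<le> 0"
    using assms(2)[unfolded G_contraction_def, rule_format, of "x (Suc n)" "x (Suc (Suc n))"]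
    by (simp add: Jungck)
  finally show "G (?r, ?s, ?s, ?r, ?r + ?s, 0) \<le> 0" .
qed simp_all

lemma G_contraction_Jungck_Cauchy:
  assumes "G \<in> GClass" "G_contraction G T g"
    and Jungck: "\<And>n. g (x (Suc n)) = T (x n)"
  shows "Cauchy (\<lambda>n. T (x n))"
proof -
  obtain \<phi> where "\<phi> \<in> PhiClass"
    and phi: "\<And>r s. 0 \<le> r \<Longrightarrow> 0 \<le> s \<Longrightarrow> G (r, s, s, r, r + s, 0) \<le> 0 \<Longrightarrow> r \<le> \<phi> s"
    using GClassD(3)[OF assms(1)] by blast
  show ?thesis
  proof (rule Cauchy_if_dist_Suc_le_PhiClass[OF \<open>\<phi> \<in> PhiClass\<close>])
    show "dist (T (x (Suc n))) (T (x (Suc (Suc n)))) \<le> \<phi> (dist (T (x n)) (T (x (Suc n))))" for n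
      using assms(1,2) phi Jungck by (rule G_contraction_Jungck_step)
  qed
qed

lemma G_contraction_coincidence_at_limit:
  assumes "G \<in> GClass" "G_contraction G T g"
    and Jungck: "\<And>n. g (x (Suc n)) = T (x n)"
    and lim: "(\<lambda>n. T (x n)) \<longlonglongrightarrow> g u"
  shows "T u = g u"
proof -
  let ?y = "\<lambda>n. T (x n)" and ?z = "g u"
  define r where "r = dist ?z (T u)"
  define q where "q n = (dist (T u) (?y (Suc n)), dist ?z (?y n), r,
      dist (?y n) (?y (Suc n)), dist ?z (?y (Suc n)), dist (?y n) (T u))" for n
  have lim_Suc: "(\<lambda>n. ?y (Suc n)) \<longlonglongrightarrow> ?z"
    using lim by (rule LIMSEQ_Suc)
  have "q \<longlonglongrightarrow> (r, 0, r, 0, 0, r)"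
    unfolding q_def r_def
    using tendsto_dist[OF tendsto_const lim_Suc, of "T u"] tendsto_dist[OF tendsto_const lim, of ?z]
      tendsto_dist[OF tendsto_const lim_Suc, of ?z] tendsto_dist[OF lim lim_Suc]
      tendsto_dist[OF lim tendsto_const, of "T u"]
    by (intro tendsto_Pair tendsto_const) (simp_all add: dist_commute)
  moreover have "G (q n) \<le> 0" for n
    using assms(2)[unfolded G_contraction_def, rule_format, of u "x (Suc n)"]
    by (simp add: Jungck q_def r_def)
  moreover have "q n \<in> nonneg6" for n
    unfolding q_def r_def nonneg6_def by simp
  moreover have "(r, 0, r, 0, 0, r) \<in> nonneg6"
    unfolding r_def nonneg6_def by simp
  ultimately have "G (r, 0, r, 0, 0, r) \<le> 0"
    using lsc_on_sequentially_le[OF GClassD(1)[OF assms(1)]] by blast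
  then have "r = 0"
    using GClassD(4)[OF assms(1), of r] zero_le_dist[of ?z "T u"] unfolding r_def by linarith
  then show ?thesis
    unfolding r_def by simp
qed

lemma compatible_continuous_coincidence_at_limit:
  assumes "compatible T g" "continuous_on UNIV T" "continuous_on UNIV g"
    and "(\<lambda>n. g (x n)) \<longlonglongrightarrow> z" "(\<lambda>n. T (x n)) \<longlonglongrightarrow> z"
  shows "T z = g z"
proof -
  have "isCont T z" "isCont g z"
    using assms(2,3) by (simp_all add: continuous_on_eq_continuous_at)
  have "(\<lambda>n. T (g (x n))) \<longlonglongrightarrow> T z"
    using \<open>isCont T z\<close> assms(4) by (rule isCont_tendsto_compose)
  moreover have "(\<lambda>n. g (T (x n))) \<longlonglongrightarrow> g z"
    using \<open>isCont g z\<close> assms(5) by (rule isCont_tendsto_compose)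
  ultimately have "(\<lambda>n. dist (T (g (x n))) (g (T (x n)))) \<longlonglongrightarrow> dist (T z) (g z)"
    by (rule tendsto_dist)
  moreover have "(\<lambda>n. dist (T (g (x n))) (g (T (x n)))) \<longlonglongrightarrow> 0"
    using assms(1)[unfolded compatible_def, rule_format, of x] assms(4,5) by blast
  ultimately have "dist (T z) (g z) = 0"
    by (rule LIMSEQ_unique)
  then show ?thesis
    by simp
qed

theorem corollary4:
  fixes T g :: "'a::metric_space \<Rightarrow> 'a" and Y :: "'a set"
  assumes "complete Y"
    and "range T \<subseteq> Y \<inter> range g"
    and "\<exists>G\<in>GClass. \<forall>x y. G (dist (T x) (T y), dist (g x) (g y), dist (g x) (T x),
                             dist (g y) (T y), dist (g x) (T y), dist (g y) (T x)) \<le> 0"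
    and "Y \<subseteq> range g \<or> (compatible T g \<and> continuous_on UNIV T \<and> continuous_on UNIV g)"
  shows "\<exists>x. T x = g x"
proof -
  obtain G where G: "G \<in> GClass" "G_contraction G T g"
    using assms(3) unfolding G_contraction_def by blast
  have "range T \<subseteq> range g"
    using assms(2) by blast
  then obtain x where Jungck: "\<And>n. g (x (Suc n)) = T (x n)"
    using Jungck_sequence_exists by blast
  have "Cauchy (\<lambda>n. T (x n))"
    using G Jungck by (rule G_contraction_Jungck_Cauchy)
  moreover have "T (x n) \<in> Y" for n
    using assms(2) by blast
  ultimately obtain z where "z \<in> Y" and lim: "(\<lambda>n. T (x n)) \<longlonglongrightarrow> z"
    using assms(1)[unfolded complete_def, rule_format, of "\<lambda>n. T (x n)"] by blast
  from assms(4) show ?thesis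
  proof
    assume "Y \<subseteq> range g"
    then have "z \<in> range g"
      using \<open>z \<in> Y\<close> by blast
    then obtain u where "z = g u"
      by (rule rangeE)
    moreover have "T u = g u"
      using G Jungck lim unfolding \<open>z = g u\<close> by (rule G_contraction_coincidence_at_limit)
    ultimately show ?thesis
      by blast
  next
    assume "compatible T g \<and> continuous_on UNIV T \<and> continuous_on UNIV g"
    moreover have "(\<lambda>n. T (x (Suc n))) \<longlonglongrightarrow> z"
      using lim by (rule LIMSEQ_Suc)
    moreover have "(\<lambda>n. g (x (Suc n))) \<longlonglongrightarrow> z"
      using lim by (simp add: Jungck)
    ultimately show ?thesis
      using compatible_continuous_coincidence_at_limit[where x = "\<lambda>n. x (Suc n)"] by blast
  qed
qed

end
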